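(* Let $\sigma$ be a nonnegative finite measure on $\mathbb{R}^2$ which is upper $\alpha$-Ahlfors regular for some $\alpha>1$ and constants $M,r_*>0$, with $0<\sigma(\mathbb{R}^2)=\Phi\le Mr_*^\alpha$. Let $X=\frac1\Phi\int_{\mathbb{R}^2}x\,d\sigma(x)$ and $r=\frac1\Phi\int_{\mathbb{R}^2}|x-X|\,d\sigma(x)$. Then $$M^{1/\alpha}r\gtrsim_\alpha\Phi^{1/\alpha}.$$
   Context: For $\alpha\in[0,2]$, a nonnegative finite measure $\sigma$ on $\mathbb{R}^2$ is upper $\alpha$-Ahlfors regular with constants $M,r_*>0$ if $\sigma(B(x,r))\le Mr^\alpha$ for all $x\in\operatorname{supp}\sigma$ and all $r\in(0,r_*]$. $A\gtrsim_\alpha B$ means $A\ge cB$ with $c>0$ depending only on $\alpha$. *)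

theory Defs
  imports "HOL-Analysis.Analysis"
begin

definition measure_support :: "'a::metric_space measure \<Rightarrow> 'a set" where
  "measure_support \<sigma> = {x. \<forall>e>0. emeasure \<sigma> (ball x e) > 0}"

definition upper_ahlfors_regular ::
  "real \<Rightarrow> real \<Rightarrow> real \<Rightarrow> (real^2) measure \<Rightarrow> bool" where
  "upper_ahlfors_regular \<alpha> M rs \<sigma> \<longleftrightarrow>
     0 \<le> \<alpha> \<and> \<alpha> \<le> 2 \<and> M > 0 \<and> rs > 0 \<and>
     (\<forall>x\<in>measure_support \<sigma>. \<forall>r. 0 < r \<and> r \<le> rs \<longrightarrow>
        emeasure \<sigma> (ball x r) \<le> ennreal (M * r powr \<alpha>))"

end

theory Submission
  imports Defs
begin

text \<open>By Markov's inequality, for every \<open>t > 2r\<close> the ball \<open>B(X, t)\<close> carries at least half of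
  the mass \<open>\<Phi>\<close>. The closed ball \<open>B[X, t]\<close> is compact with positive mass, so it contains a point
  \<open>y\<close> of the support, and \<open>B(X, t) \<subseteq> B(y, 2t)\<close>. The Ahlfors bound at \<open>y\<close>, which extends to
  all radii because \<open>\<Phi> \<le> M r\<^sub>*\<^sup>\<alpha>\<close>, gives \<open>\<Phi> \<le> 2M(2t)\<^sup>\<alpha>\<close>; letting \<open>t\<close> decrease to \<open>2r\<close>
  yields \<open>\<Phi> \<le> 2M(4r)\<^sup>\<alpha>\<close>. The centre \<open>X\<close> may be any point.\<close>

lemma compact_meets_measure_support:
  fixes \<sigma> :: "'a::metric_space measure"
  assumes sets: "sets \<sigma> = sets borel" and "compact C" and pos: "emeasure \<sigma> C > 0"
  shows "C \<inter> measure_support \<sigma> \<noteq> {}"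
proof
  assume "C \<inter> measure_support \<sigma> = {}"
  then have "\<forall>x\<in>C. \<exists>e>0. emeasure \<sigma> (ball x e) = 0"
    by (auto simp: measure_support_def disjoint_iff not_less)
  then obtain e where e: "\<And>x. x \<in> C \<Longrightarrow> e x > 0 \<and> emeasure \<sigma> (ball x (e x)) = 0"
    by metis
  have "C \<subseteq> (\<Union>x\<in>C. ball x (e x))"
    using e by force
  then obtain T where T: "T \<subseteq> C" "finite T" "C \<subseteq> (\<Union>x\<in>T. ball x (e x))"
    using compactE_image[OF \<open>compact C\<close>, of C "\<lambda>x. ball x (e x)"] by blast
  have "emeasure \<sigma> C \<le> emeasure \<sigma> (\<Union>x\<in>T. ball x (e x))"
    using T(3) by (intro emeasure_mono) (auto simp: sets intro!: borel_open)
  also have "\<dots> \<le> (\<Sum>x\<in>T. emeasure \<sigma> (ball x (e x)))"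
    using T(2) by (intro emeasure_subadditive_finite) (auto simp: sets)
  also have "\<dots> = 0"
    using T(1) e by (intro sum.neutral) blast
  finally show False
    using pos by simp
qed

lemma upper_ahlfors_regular_measure_ball_le:
  fixes \<sigma> :: "(real^2) measure"
  assumes "finite_measure \<sigma>" and sets: "sets \<sigma> = sets borel"
    and ar: "upper_ahlfors_regular \<alpha> M rs \<sigma>" and total: "measure \<sigma> UNIV \<le> M * rs powr \<alpha>"
    and "y \<in> measure_support \<sigma>" and "0 < s"
  shows "measure \<sigma> (ball y s) \<le> M * s powr \<alpha>"
proof -
  interpret finite_measure \<sigma> by fact
  have "M > 0" "rs > 0" "\<alpha> \<ge> 0"
    using ar by (auto simp: upper_ahlfors_regular_def)
  show ?thesis
  proof (cases "s \<le> rs")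
    case True
    then have "emeasure \<sigma> (ball y s) \<le> ennreal (M * s powr \<alpha>)"
      using ar \<open>y \<in> measure_support \<sigma>\<close> \<open>0 < s\<close> by (auto simp: upper_ahlfors_regular_def)
    then show ?thesis
      using \<open>M > 0\<close> by (simp add: emeasure_eq_measure ennreal_le_iff)
  next
    case False
    have "measure \<sigma> (ball y s) \<le> measure \<sigma> UNIV"
      by (intro finite_measure_mono) (simp_all add: sets)
    also have "\<dots> \<le> M * rs powr \<alpha>"
      by (fact total)
    also have "\<dots> \<le> M * s powr \<alpha>"
      using False \<open>M > 0\<close> \<open>rs > 0\<close> \<open>\<alpha> \<ge> 0\<close> by (simp add: powr_mono2)
    finally show ?thesis .
  qed
qed

lemma measure_le_twice_measure_ball_Markov:
  fixes \<sigma> :: "'a::real_normed_vector measure"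
  assumes "finite_measure \<sigma>" and sets: "sets \<sigma> = sets borel"
    and int: "integrable \<sigma> (\<lambda>x. norm (x - X))" and "0 < t"
    and mean: "2 * (\<integral>x. norm (x - X) \<partial>\<sigma>) \<le> t * measure \<sigma> UNIV"
  shows "measure \<sigma> UNIV \<le> 2 * measure \<sigma> (ball X t)"
proof -
  interpret finite_measure \<sigma> by fact
  have space: "space \<sigma> = UNIV"
    using sets_eq_imp_space_eq[OF sets] by simp
  have "{x\<in>space \<sigma>. t \<le> norm (x - X)} = UNIV - ball X t"
    by (auto simp: space dist_norm norm_minus_commute)
  then have "measure \<sigma> (UNIV - ball X t) \<le> (\<integral>x. norm (x - X) \<partial>\<sigma>) / t"
    using int \<open>0 < t\<close> integral_Markov_inequality_measure[where A = "{}"] by force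
  also have "\<dots> \<le> measure \<sigma> UNIV / 2"
    using mean \<open>0 < t\<close> by (simp add: field_simps)
  finally show ?thesis
    using finite_measure_compl[of "ball X t"] by (simp add: sets space)
qed

lemma upper_ahlfors_regular_half_mass_ball:
  fixes \<sigma> :: "(real^2) measure"
  assumes "finite_measure \<sigma>" and sets: "sets \<sigma> = sets borel"
    and ar: "upper_ahlfors_regular \<alpha> M rs \<sigma>" and total: "measure \<sigma> UNIV \<le> M * rs powr \<alpha>"
    and pos: "0 < measure \<sigma> UNIV" and "0 < t"
    and half: "measure \<sigma> UNIV \<le> 2 * measure \<sigma> (ball X t)"
  shows "measure \<sigma> UNIV \<le> 2 * M * (2 * t) powr \<alpha>"
proof -
  interpret finite_measure \<sigma> by fact
  have "measure \<sigma> (ball X t) \<le> measure \<sigma> (cball X t)"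
    by (intro finite_measure_mono ball_subset_cball) (simp add: sets)
  then have "emeasure \<sigma> (cball X t) > 0"
    using half pos by (simp add: emeasure_eq_measure sets)
  then obtain y where y: "y \<in> cball X t" "y \<in> measure_support \<sigma>"
    using compact_meets_measure_support[OF sets compact_cball] by blast
  have "ball X t \<subseteq> ball y (2 * t)"
  proof
    fix z assume "z \<in> ball X t"
    then show "z \<in> ball y (2 * t)"
      using y(1) dist_triangle[of y z X] by (simp add: dist_commute)
  qed
  then have "measure \<sigma> (ball X t) \<le> measure \<sigma> (ball y (2 * t))"
    by (rule finite_measure_mono) (simp add: sets)
  also have "\<dots> \<le> M * (2 * t) powr \<alpha>"
    using upper_ahlfors_regular_measure_ball_le[OF \<open>finite_measure \<sigma>\<close> sets ar total y(2)] \<open>0 < t\<close>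
    by simp
  finally show ?thesis
    using half by simp
qed

lemma upper_ahlfors_regular_mean_deviation_lower_bound:
  fixes \<sigma> :: "(real^2) measure"
  assumes "finite_measure \<sigma>" and sets: "sets \<sigma> = sets borel"
    and ar: "upper_ahlfors_regular \<alpha> M rs \<sigma>" and "0 < \<alpha>"
    and total: "measure \<sigma> UNIV \<le> M * rs powr \<alpha>" and pos: "0 < measure \<sigma> UNIV"
    and int: "integrable \<sigma> (\<lambda>x. norm (x - X))"
  shows "(measure \<sigma> UNIV / (2 * M)) powr (1 / \<alpha>)
           \<le> 4 * ((1 / measure \<sigma> UNIV) * (\<integral>x. norm (x - X) \<partial>\<sigma>))"
proof -
  define \<Phi> where "\<Phi> = measure \<sigma> UNIV"
  define r where "r = (1 / \<Phi>) * (\<integral>x. norm (x - X) \<partial>\<sigma>)"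
  have "M > 0"
    using ar by (simp add: upper_ahlfors_regular_def)
  have "\<Phi> > 0"
    using pos by (simp add: \<Phi>_def)
  have "r \<ge> 0"
    using \<open>\<Phi> > 0\<close> by (simp add: r_def)
  have radius: "(\<Phi> / (2 * M)) powr (1 / \<alpha>) / 2 \<le> t" if "2 * r < t" for t
  proof -
    have "0 < t"
      using that \<open>r \<ge> 0\<close> by linarith
    have "2 * (\<integral>x. norm (x - X) \<partial>\<sigma>) \<le> t * \<Phi>"
      using that \<open>\<Phi> > 0\<close> by (simp add: r_def field_simps)
    then have "\<Phi> \<le> 2 * measure \<sigma> (ball X t)"
      using measure_le_twice_measure_ball_Markov[OF \<open>finite_measure \<sigma>\<close> sets int \<open>0 < t\<close>]
      by (simp add: \<Phi>_def)
    then have "\<Phi> \<le> 2 * M * (2 * t) powr \<alpha>"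
      using upper_ahlfors_regular_half_mass_ball[OF \<open>finite_measure \<sigma>\<close> sets ar total pos \<open>0 < t\<close>]
      by (simp add: \<Phi>_def)
    then have "(\<Phi> / (2 * M)) powr (1 / \<alpha>) \<le> ((2 * t) powr \<alpha>) powr (1 / \<alpha>)"
      using \<open>M > 0\<close> \<open>\<Phi> > 0\<close> \<open>0 < \<alpha>\<close> by (intro powr_mono2) (simp_all add: field_simps)
    also have "\<dots> = 2 * t"
      using \<open>0 < t\<close> \<open>0 < \<alpha>\<close> by (simp add: powr_powr)
    finally show ?thesis
      by simp
  qed
  have "(\<Phi> / (2 * M)) powr (1 / \<alpha>) / 2 \<le> 2 * r"
    by (rule dense_ge) (fact radius)
  then show ?thesis
    by (simp add: \<Phi>_def r_def)
qed

theorem corollary4p8: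
  fixes \<alpha> :: real
  assumes "1 < \<alpha>"
  shows "\<exists>c>0. \<forall>(\<sigma>::(real^2) measure) M rs.
    sets \<sigma> = sets borel \<longrightarrow> finite_measure \<sigma> \<longrightarrow>
    upper_ahlfors_regular \<alpha> M rs \<sigma> \<longrightarrow>
    0 < measure \<sigma> UNIV \<longrightarrow> measure \<sigma> UNIV \<le> M * rs powr \<alpha> \<longrightarrow>
    integrable \<sigma> (\<lambda>x. x) \<longrightarrow>
    (let \<Phi> = measure \<sigma> UNIV;
         X = (1 / \<Phi>) *\<^sub>R integral\<^sup>L \<sigma> (\<lambda>x. x);
         r = (1 / \<Phi>) * integral\<^sup>L \<sigma> (\<lambda>x. norm (x - X))
     in M powr (1 / \<alpha>) * r \<ge> c * \<Phi> powr (1 / \<alpha>))"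
proof (intro exI[of _ "1 / (4 * 2 powr (1 / \<alpha>))"] conjI allI impI)
  show "0 < 1 / (4 * 2 powr (1 / \<alpha>))"
    by simp
  fix \<sigma> :: "(real^2) measure" and M rs
  assume sets: "sets \<sigma> = sets borel" and fin: "finite_measure \<sigma>"
    and ar: "upper_ahlfors_regular \<alpha> M rs \<sigma>"
    and pos: "0 < measure \<sigma> UNIV" and total: "measure \<sigma> UNIV \<le> M * rs powr \<alpha>"
    and int: "integrable \<sigma> (\<lambda>x. x)"
  define \<Phi> where "\<Phi> = measure \<sigma> UNIV"
  define X where "X = (1 / \<Phi>) *\<^sub>R integral\<^sup>L \<sigma> (\<lambda>x. x)"
  define r where "r = (1 / \<Phi>) * integral\<^sup>L \<sigma> (\<lambda>x. norm (x - X))"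
  have "M > 0"
    using ar by (simp add: upper_ahlfors_regular_def)
  have "integrable \<sigma> (\<lambda>x. norm (x - X))"
    by (intro integrable_norm Bochner_Integration.integrable_diff int
        finite_measure.integrable_const[OF fin])
  then have "(\<Phi> / (2 * M)) powr (1 / \<alpha>) \<le> 4 * r"
    using upper_ahlfors_regular_mean_deviation_lower_bound[OF fin sets ar _ total pos] assms
    by (simp add: \<Phi>_def r_def)
  then have "M powr (1 / \<alpha>) * (\<Phi> / (2 * M)) powr (1 / \<alpha>) \<le> M powr (1 / \<alpha>) * (4 * r)"
    by (simp add: mult_left_mono)
  moreover have "M powr (1 / \<alpha>) * (\<Phi> / (2 * M)) powr (1 / \<alpha>) = \<Phi> powr (1 / \<alpha>) / 2 powr (1 / \<alpha>)"
    using \<open>M > 0\<close> pos by (simp add: \<Phi>_def powr_divide powr_mult)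
  ultimately have "M powr (1 / \<alpha>) * r \<ge> 1 / (4 * 2 powr (1 / \<alpha>)) * \<Phi> powr (1 / \<alpha>)"
    by simp
  then show "let \<Phi> = measure \<sigma> UNIV;
         X = (1 / \<Phi>) *\<^sub>R integral\<^sup>L \<sigma> (\<lambda>x. x);
         r = (1 / \<Phi>) * integral\<^sup>L \<sigma> (\<lambda>x. norm (x - X))
     in M powr (1 / \<alpha>) * r \<ge> 1 / (4 * 2 powr (1 / \<alpha>)) * \<Phi> powr (1 / \<alpha>)"
    by (simp only: Let_def r_def X_def \<Phi>_def)
qed

end
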